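(* Let $A$ be a convex $m\times n$ $(0,1)$-matrix in which every row sum and every column sum is at least $2$. Then $A$ permits an interchange resulting in another convex $m\times n$ $(0,1)$-matrix $B$ if and only if there are indices $1\le a<b\le m$ and $1\le c<d\le n$ such that, with $k=b-a+1$ and $l=d-c+1$: (i) the submatrix of $A$ in rows $a,\dots,b$ and columns $c,\dots,d$ equals $J^1_{k,l}$ or $J^2_{k,l}$; (ii) in rows $a$ and $b$, all entries of $A$ outside columns $c,\dots,d$ are $0$; (iii) in columns $c$ and $d$, all entries of $A$ outside rows $a,\dots,b$ are $0$.
   Context: A $(0,1)$-matrix is convex if in every row and every column the 1's occur consecutively. An interchange replaces a $2\times 2$ submatrix (in rows $i<i'$ and columns $j<j'$) equal to $\begin{bmatrix}1&0\\0&1\end{bmatrix}$ by $\begin{bmatrix}0&1\\1&0\end{bmatrix}$ or vice versa; it preserves row and column sums. $J_{k,l}$ is the $k\times l$ all-ones matrix; $J^1_{k,l}$ is obtained from $J_{k,l}$ by replacing the entries in positions $(1,1)$ and $(k,l)$ by $0$, and $J^2_{k,l}$ is obtained from $J_{k,l}$ by replacing the entries in positions $(1,l)$ and $(k,1)$ by $0$. *)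

theory Defs
  imports Main
begin

text \<open>An m x n matrix is a function nat => nat => nat; only entries (i,j) with
  i < m, j < n are meaningful. Indices are 0-based.\<close>

definition zero_one :: "nat \<Rightarrow> nat \<Rightarrow> (nat \<Rightarrow> nat \<Rightarrow> nat) \<Rightarrow> bool" where
  "zero_one m n A \<longleftrightarrow> (\<forall>i<m. \<forall>j<n. A i j = 0 \<or> A i j = 1)"

definition convex01 :: "nat \<Rightarrow> nat \<Rightarrow> (nat \<Rightarrow> nat \<Rightarrow> nat) \<Rightarrow> bool" where
  "convex01 m n A \<longleftrightarrow> zero_one m n A \<and>
     (\<forall>i<m. \<forall>j1 j j2. j1 \<le> j \<and> j \<le> j2 \<and> j2 < n \<and> A i j1 = 1 \<and> A i j2 = 1 \<longrightarrow> A i j = 1) \<and>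
     (\<forall>j<n. \<forall>i1 i i2. i1 \<le> i \<and> i \<le> i2 \<and> i2 < m \<and> A i1 j = 1 \<and> A i2 j = 1 \<longrightarrow> A i j = 1)"

definition interchange :: "nat \<Rightarrow> nat \<Rightarrow> (nat \<Rightarrow> nat \<Rightarrow> nat) \<Rightarrow> (nat \<Rightarrow> nat \<Rightarrow> nat) \<Rightarrow> bool" where
  "interchange m n A B \<longleftrightarrow> (\<exists>i i' j j'. i < i' \<and> i' < m \<and> j < j' \<and> j' < n \<and>
     ((A i j = 1 \<and> A i j' = 0 \<and> A i' j = 0 \<and> A i' j' = 1 \<and>
       B i j = 0 \<and> B i j' = 1 \<and> B i' j = 1 \<and> B i' j' = 0) \<or>
      (A i j = 0 \<and> A i j' = 1 \<and> A i' j = 1 \<and> A i' j' = 0 \<and>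
       B i j = 1 \<and> B i j' = 0 \<and> B i' j = 0 \<and> B i' j' = 1)) \<and>
     (\<forall>p<m. \<forall>q<n. (p,q) \<notin> {(i,j),(i,j'),(i',j),(i',j')} \<longrightarrow> B p q = A p q))"

text \<open>J^1_{k,l} and J^2_{k,l} as functions of 0-based local indices (r,s), r<k, s<l.\<close>
definition J1 :: "nat \<Rightarrow> nat \<Rightarrow> nat \<Rightarrow> nat \<Rightarrow> nat" where
  "J1 k l r s = (if (r = 0 \<and> s = 0) \<or> (r = k - 1 \<and> s = l - 1) then 0 else 1)"

definition J2 :: "nat \<Rightarrow> nat \<Rightarrow> nat \<Rightarrow> nat \<Rightarrow> nat" where
  "J2 k l r s = (if (r = 0 \<and> s = l - 1) \<or> (r = k - 1 \<and> s = 0) then 0 else 1)"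

definition submatrix_eq :: "(nat \<Rightarrow> nat \<Rightarrow> nat) \<Rightarrow> nat \<Rightarrow> nat \<Rightarrow> nat \<Rightarrow> nat \<Rightarrow> (nat \<Rightarrow> nat \<Rightarrow> nat) \<Rightarrow> bool" where
  "submatrix_eq A a b c d M \<longleftrightarrow> (\<forall>r s. r \<le> b - a \<and> s \<le> d - c \<longrightarrow> A (a + r) (c + s) = M r s)"

end

theory Submission
  imports Defs
begin

(* An interchange at rows i < i' and columns j < j' changes each of these four lines in exactly
   two places, exchanging a 1 and a 0. If a convex line with at least two 1's is still convex
   after such an exchange at positions j < j', it vanishes outside [j, j'] and is 1 strictly
   between j and j': it is framed by j and j'. Conversely, if the two rows and two columns of a
   rectangle are framed by its sides and its corners admit an interchange, flipping the corners
   leaves each line either untouched or framed, hence convex. Finally, row convexity turns framed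
   boundary lines into a rectangle of 1's except at two opposite corners, which is the J^1 / J^2
   shape together with conditions (ii) and (iii). *)

definition convex_line :: "nat \<Rightarrow> (nat \<Rightarrow> nat) \<Rightarrow> bool" where
  "convex_line n f \<longleftrightarrow> (\<forall>j1 j j2. j1 \<le> j \<and> j \<le> j2 \<and> j2 < n \<and> f j1 = 1 \<and> f j2 = 1 \<longrightarrow> f j = 1)"

lemma convex01_iff:
  "convex01 m n A \<longleftrightarrow>
     zero_one m n A \<and> (\<forall>i<m. convex_line n (A i)) \<and> (\<forall>j<n. convex_line m (\<lambda>i. A i j))"
  unfolding convex01_def convex_line_def by blast

lemma convex_lineD:
  "convex_line n f \<Longrightarrow> j1 \<le> j \<Longrightarrow> j \<le> j2 \<Longrightarrow> j2 < n \<Longrightarrow> f j1 = 1 \<Longrightarrow> f j2 = 1 \<Longrightarrow> f j = 1"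
  unfolding convex_line_def by blast

definition framed :: "nat \<Rightarrow> (nat \<Rightarrow> nat) \<Rightarrow> nat \<Rightarrow> nat \<Rightarrow> bool" where
  "framed n f lo hi \<longleftrightarrow> (\<forall>x<n. (x < lo \<or> hi < x \<longrightarrow> f x = 0) \<and> (lo < x \<and> x < hi \<longrightarrow> f x = 1))"

lemma framed_cong:
  assumes "framed n f lo hi" "lo \<le> hi" "\<forall>x<n. x \<noteq> lo \<and> x \<noteq> hi \<longrightarrow> g x = f x"
  shows "framed n g lo hi"
  using assms unfolding framed_def by auto

lemma convex_line_if_framed:
  assumes "framed n f lo hi"
  shows "convex_line n f"
  unfolding convex_line_def
proof (intro allI impI)
  fix j1 j j2 assume j: "j1 \<le> j \<and> j \<le> j2 \<and> j2 < n \<and> f j1 = 1 \<and> f j2 = 1"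
  then have "lo \<le> j1" "j2 \<le> hi"
    using assms unfolding framed_def by (metis le_less_trans not_le zero_neq_one)+
  then consider "j = j1" | "j = j2" | "lo < j \<and> j < hi"
    using j by linarith
  then show "f j = 1"
    using j assms unfolding framed_def by cases auto
qed

lemma exists_nonzero_outside:
  fixes f :: "'a \<Rightarrow> nat"
  assumes "finite S" "T \<subseteq> S" "sum f T < sum f S"
  shows "\<exists>x\<in>S - T. f x \<noteq> 0"
proof (rule ccontr)
  assume "\<not> ?thesis"
  then have "sum f (S - T) = 0" by simp
  then show False
    using assms sum.subset_diff[of T S f] by simp
qed

lemma framed_if_exchange_10:
  assumes f01: "\<forall>x<n. f x = 0 \<or> f x = 1"
    and cf: "convex_line n f" and cg: "convex_line n g"
    and jj': "j < j'" "j' < n"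
    and fg: "f j = 1" "f j' = 0" "g j = 0" "g j' = 1"
    and agree: "\<forall>x<n. x \<noteq> j \<and> x \<noteq> j' \<longrightarrow> g x = f x"
    and q: "q < n" "q \<noteq> j" "q \<noteq> j'" "f q = 1"
  shows "framed n f j j'"
proof -
  have gq: "g q = 1" using agree q by auto
  have outside: "f x = 0" if x: "x < n" "x < j \<or> j' < x" for x
  proof -
    have "f x \<noteq> 1"
    proof
      assume fx: "f x = 1"
      from x(2) show False
      proof
        assume "x < j"
        then have "g x = 1" using agree x fx jj' by auto
        then have "g j = 1" using convex_lineD[OF cg, of x j j'] \<open>x < j\<close> jj' fg by simp
        then show False using fg by simp
      next
        assume "j' < x"
        then have "f j' = 1" using convex_lineD[OF cf, of j j' x] x fx fg jj' by simp
        then show False using fg by simp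
      qed
    qed
    then show ?thesis using f01 x by auto
  qed
  \<comment> \<open>q is a common 1 of f and g: convexity of f on [j, q] and of g on [q, j'] fills (j, j').\<close>
  have inside: "f x = 1" if x: "x < n" "j < x" "x < j'" for x
  proof (cases "x \<le> q")
    case True
    then show ?thesis using convex_lineD[OF cf, of j x q] x q fg by simp
  next
    case False
    then have "g x = 1" using convex_lineD[OF cg, of q x j'] x jj' gq fg by simp
    then show ?thesis using agree x by auto
  qed
  show ?thesis
    unfolding framed_def using outside inside by blast
qed

lemma framed_if_exchange:
  assumes f01: "\<forall>x<n. f x = 0 \<or> f x = 1" and g01: "\<forall>x<n. g x = 0 \<or> g x = 1"
    and cf: "convex_line n f" and cg: "convex_line n g"
    and jj': "j < j'" "j' < n"
    and fg: "f j \<noteq> f j'" "g j = f j'" "g j' = f j"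
    and agree: "\<forall>x<n. x \<noteq> j \<and> x \<noteq> j' \<longrightarrow> g x = f x"
    and two: "2 \<le> sum f {..<n}"
  shows "framed n f j j'"
proof -
  have ends: "f j = 0 \<or> f j = 1" "f j' = 0 \<or> f j' = 1" using f01 jj' by simp_all
  then have "sum f {j, j'} = 1" using fg(1) jj' by auto
  then obtain q where q: "q < n" "q \<noteq> j" "q \<noteq> j'" "f q = 1"
    using exists_nonzero_outside[of "{..<n}" "{j, j'}" f] two jj' f01 by fastforce
  consider "f j = 1" "f j' = 0" | "f j = 0" "f j' = 1" using ends fg(1) by fastforce
  then show ?thesis
  proof cases
    case 1
    then show ?thesis using framed_if_exchange_10[OF f01 cf cg jj' _ _ _ _ agree q] fg by simp
  next
    case 2
    have "framed n g j j'"
      using framed_if_exchange_10[OF g01 cg cf jj', of q] 2 fg agree q by simp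
    then show ?thesis using framed_cong[of n g j j' f] agree jj' by simp
  qed
qed

definition interchangeable :: "(nat \<Rightarrow> nat \<Rightarrow> nat) \<Rightarrow> nat \<Rightarrow> nat \<Rightarrow> nat \<Rightarrow> nat \<Rightarrow> bool" where
  "interchangeable A a b c d \<longleftrightarrow>
     (A a c = 1 \<and> A a d = 0 \<and> A b c = 0 \<and> A b d = 1) \<or> (A a c = 0 \<and> A a d = 1 \<and> A b c = 1 \<and> A b d = 0)"

definition framed_rect :: "nat \<Rightarrow> nat \<Rightarrow> (nat \<Rightarrow> nat \<Rightarrow> nat) \<Rightarrow> nat \<Rightarrow> nat \<Rightarrow> nat \<Rightarrow> nat \<Rightarrow> bool" where
  "framed_rect m n A a b c d \<longleftrightarrow>
     framed n (A a) c d \<and> framed n (A b) c d \<and> framed m (\<lambda>p. A p c) a b \<and> framed m (\<lambda>p. A p d) a b"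

lemma framed_rect_if_convex_interchange:
  assumes cA: "convex01 m n A" and cB: "convex01 m n B" and AB: "interchange m n A B"
    and rows: "\<forall>i<m. 2 \<le> (\<Sum>j<n. A i j)" and cols: "\<forall>j<n. 2 \<le> (\<Sum>i<m. A i j)"
  shows "\<exists>a b c d. a < b \<and> b < m \<and> c < d \<and> d < n \<and>
           interchangeable A a b c d \<and> framed_rect m n A a b c d"
proof -
  obtain a b c d where bounds: "a < b" "b < m" "c < d" "d < n"
    and corners: "(A a c = 1 \<and> A a d = 0 \<and> A b c = 0 \<and> A b d = 1 \<and>
                   B a c = 0 \<and> B a d = 1 \<and> B b c = 1 \<and> B b d = 0) \<or>
                  (A a c = 0 \<and> A a d = 1 \<and> A b c = 1 \<and> A b d = 0 \<and>
                   B a c = 1 \<and> B a d = 0 \<and> B b c = 0 \<and> B b d = 1)"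
    and agree: "\<forall>p<m. \<forall>q<n. (p, q) \<notin> {(a, c), (a, d), (b, c), (b, d)} \<longrightarrow> B p q = A p q"
    using AB unfolding interchange_def by (elim exE conjE) (rule that)
  have A01: "\<forall>p<m. \<forall>q<n. A p q = 0 \<or> A p q = 1" and B01: "\<forall>p<m. \<forall>q<n. B p q = 0 \<or> B p q = 1"
    using cA cB unfolding convex01_iff zero_one_def by blast+
  have cvA: "\<forall>p<m. convex_line n (A p)" "\<forall>q<n. convex_line m (\<lambda>p. A p q)"
    and cvB: "\<forall>p<m. convex_line n (B p)" "\<forall>q<n. convex_line m (\<lambda>p. B p q)"
    using cA cB unfolding convex01_iff by blast+
  have "framed n (A p) c d" if p: "p = a \<or> p = b" for p
  proof (rule framed_if_exchange[of n "A p" "B p"])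
    have "p < m" using p bounds by auto
    then show "\<forall>x<n. A p x = 0 \<or> A p x = 1" "\<forall>x<n. B p x = 0 \<or> B p x = 1"
      "convex_line n (A p)" "convex_line n (B p)" "2 \<le> sum (A p) {..<n}"
      using A01 B01 cvA cvB rows by simp_all
    show "\<forall>x<n. x \<noteq> c \<and> x \<noteq> d \<longrightarrow> B p x = A p x"
      using agree \<open>p < m\<close> by auto
    show "A p c \<noteq> A p d" "B p c = A p d" "B p d = A p c"
      using p corners by auto
  qed (use bounds in auto)
  moreover have "framed m (\<lambda>p. A p q) a b" if q: "q = c \<or> q = d" for q
  proof (rule framed_if_exchange[of m "\<lambda>p. A p q" "\<lambda>p. B p q"])
    have "q < n" using q bounds by auto
    then show "\<forall>x<m. A x q = 0 \<or> A x q = 1" "\<forall>x<m. B x q = 0 \<or> B x q = 1"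
      "convex_line m (\<lambda>p. A p q)" "convex_line m (\<lambda>p. B p q)" "2 \<le> (\<Sum>p<m. A p q)"
      using A01 B01 cvA cvB cols by simp_all
    show "\<forall>x<m. x \<noteq> a \<and> x \<noteq> b \<longrightarrow> B x q = A x q"
      using agree \<open>q < n\<close> by auto
    show "A a q \<noteq> A b q" "B a q = A b q" "B b q = A a q"
      using q corners by auto
  qed (use bounds in auto)
  ultimately have "framed_rect m n A a b c d"
    unfolding framed_rect_def by blast
  moreover have "interchangeable A a b c d"
    using corners unfolding interchangeable_def by blast
  ultimately show ?thesis using bounds by blast
qed

definition flip_corners :: "(nat \<Rightarrow> nat \<Rightarrow> nat) \<Rightarrow> nat \<Rightarrow> nat \<Rightarrow> nat \<Rightarrow> nat \<Rightarrow> nat \<Rightarrow> nat \<Rightarrow> nat" where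
  "flip_corners A a b c d p q = (if (p = a \<or> p = b) \<and> (q = c \<or> q = d) then 1 - A p q else A p q)"

lemma interchange_flip_corners:
  assumes "a < b" "b < m" "c < d" "d < n" "interchangeable A a b c d"
  shows "interchange m n A (flip_corners A a b c d)"
  unfolding interchange_def
proof (intro exI conjI)
  show "\<forall>p<m. \<forall>q<n. (p, q) \<notin> {(a, c), (a, d), (b, c), (b, d)} \<longrightarrow> flip_corners A a b c d p q = A p q"
    by (auto simp: flip_corners_def)
  show "A a c = 1 \<and> A a d = 0 \<and> A b c = 0 \<and> A b d = 1 \<and>
        flip_corners A a b c d a c = 0 \<and> flip_corners A a b c d a d = 1 \<and>
        flip_corners A a b c d b c = 1 \<and> flip_corners A a b c d b d = 0 \<or>
        A a c = 0 \<and> A a d = 1 \<and> A b c = 1 \<and> A b d = 0 \<and>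
        flip_corners A a b c d a c = 1 \<and> flip_corners A a b c d a d = 0 \<and>
        flip_corners A a b c d b c = 0 \<and> flip_corners A a b c d b d = 1"
    using assms(5) unfolding interchangeable_def flip_corners_def by auto
qed (use assms in auto)

lemma convex01_flip_corners:
  assumes cA: "convex01 m n A" and "a \<le> b" "c \<le> d" and fr: "framed_rect m n A a b c d"
  shows "convex01 m n (flip_corners A a b c d)"
  unfolding convex01_iff
proof (intro conjI allI impI)
  show "zero_one m n (flip_corners A a b c d)"
    using cA unfolding convex01_iff zero_one_def flip_corners_def by auto
next
  fix p assume "p < m"
  show "convex_line n (flip_corners A a b c d p)"
  proof (cases "p = a \<or> p = b")
    case True
    then have "framed n (A p) c d" using fr unfolding framed_rect_def by blast
    then have "framed n (flip_corners A a b c d p) c d"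
      by (rule framed_cong) (use \<open>c \<le> d\<close> in \<open>auto simp: flip_corners_def\<close>)
    then show ?thesis by (rule convex_line_if_framed)
  next
    case False
    then have "flip_corners A a b c d p = A p" by (auto simp: flip_corners_def)
    then show ?thesis using cA \<open>p < m\<close> unfolding convex01_iff by simp
  qed
next
  fix q assume "q < n"
  show "convex_line m (\<lambda>p. flip_corners A a b c d p q)"
  proof (cases "q = c \<or> q = d")
    case True
    then have "framed m (\<lambda>p. A p q) a b" using fr unfolding framed_rect_def by blast
    then have "framed m (\<lambda>p. flip_corners A a b c d p q) a b"
      by (rule framed_cong) (use \<open>a \<le> b\<close> in \<open>auto simp: flip_corners_def\<close>)
    then show ?thesis by (rule convex_line_if_framed)
  next
    case False
    then have "(\<lambda>p. flip_corners A a b c d p q) = (\<lambda>p. A p q)" by (auto simp: flip_corners_def)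
    then show ?thesis using cA \<open>q < n\<close> unfolding convex01_iff by simp
  qed
qed

definition ones_off_corners :: "(nat \<Rightarrow> nat \<Rightarrow> nat) \<Rightarrow> nat \<Rightarrow> nat \<Rightarrow> nat \<Rightarrow> nat \<Rightarrow> bool" where
  "ones_off_corners A a b c d \<longleftrightarrow>
     (\<forall>p q. a \<le> p \<and> p \<le> b \<and> c \<le> q \<and> q \<le> d \<and> (p \<noteq> a \<and> p \<noteq> b \<or> q \<noteq> c \<and> q \<noteq> d) \<longrightarrow> A p q = 1)"

lemma submatrix_eqD:
  assumes "submatrix_eq A a b c d M" "a \<le> p" "p \<le> b" "c \<le> q" "q \<le> d"
  shows "A p q = M (p - a) (q - c)"
  using assms unfolding submatrix_eq_def
  by (metis add_diff_inverse_nat diff_le_mono not_le)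

lemma submatrix_eq_J1_or_J2_iff:
  assumes "a < b" "c < d"
  shows "submatrix_eq A a b c d (J1 (b - a + 1) (d - c + 1)) \<or>
         submatrix_eq A a b c d (J2 (b - a + 1) (d - c + 1)) \<longleftrightarrow>
         interchangeable A a b c d \<and> ones_off_corners A a b c d"
proof
  assume "submatrix_eq A a b c d (J1 (b - a + 1) (d - c + 1)) \<or>
          submatrix_eq A a b c d (J2 (b - a + 1) (d - c + 1))"
  then show "interchangeable A a b c d \<and> ones_off_corners A a b c d"
  proof (elim disjE)
    assume "submatrix_eq A a b c d (J1 (b - a + 1) (d - c + 1))"
    then have "A p q = J1 (b - a + 1) (d - c + 1) (p - a) (q - c)"
      if "a \<le> p" "p \<le> b" "c \<le> q" "q \<le> d" for p q
      using submatrix_eqD that by blast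
    then show ?thesis
      using assms unfolding interchangeable_def ones_off_corners_def J1_def by auto
  next
    assume "submatrix_eq A a b c d (J2 (b - a + 1) (d - c + 1))"
    then have "A p q = J2 (b - a + 1) (d - c + 1) (p - a) (q - c)"
      if "a \<le> p" "p \<le> b" "c \<le> q" "q \<le> d" for p q
      using submatrix_eqD that by blast
    then show ?thesis
      using assms unfolding interchangeable_def ones_off_corners_def J2_def by auto
  qed
next
  assume "interchangeable A a b c d \<and> ones_off_corners A a b c d"
  then have corners: "interchangeable A a b c d" and ones: "ones_off_corners A a b c d" by simp_all
  have corner_or_one: "(r, s) \<in> {(0, 0), (0, d - c), (b - a, 0), (b - a, d - c)} \<or> A (a + r) (c + s) = 1"
    if "r \<le> b - a" "s \<le> d - c" for r s
  proof (cases "(r, s) \<in> {(0, 0), (0, d - c), (b - a, 0), (b - a, d - c)}")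
    case False
    then have "a + r \<le> b" "c + s \<le> d" "a + r \<noteq> a \<and> a + r \<noteq> b \<or> c + s \<noteq> c \<and> c + s \<noteq> d"
      using that assms by auto
    then show ?thesis using ones unfolding ones_off_corners_def by simp
  qed simp
  from corners show "submatrix_eq A a b c d (J1 (b - a + 1) (d - c + 1)) \<or>
                     submatrix_eq A a b c d (J2 (b - a + 1) (d - c + 1))"
    unfolding interchangeable_def
  proof (elim disjE)
    assume corner_values: "A a c = 1 \<and> A a d = 0 \<and> A b c = 0 \<and> A b d = 1"
    have "submatrix_eq A a b c d (J2 (b - a + 1) (d - c + 1))"
      unfolding submatrix_eq_def
    proof (intro allI impI)
      fix r s assume "r \<le> b - a \<and> s \<le> d - c"
      then show "A (a + r) (c + s) = J2 (b - a + 1) (d - c + 1) r s"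
        using corner_or_one[of r s] corner_values assms by (auto simp: J2_def le_add_diff_inverse)
    qed
    then show ?thesis ..
  next
    assume corner_values: "A a c = 0 \<and> A a d = 1 \<and> A b c = 1 \<and> A b d = 0"
    have "submatrix_eq A a b c d (J1 (b - a + 1) (d - c + 1))"
      unfolding submatrix_eq_def
    proof (intro allI impI)
      fix r s assume "r \<le> b - a \<and> s \<le> d - c"
      then show "A (a + r) (c + s) = J1 (b - a + 1) (d - c + 1) r s"
        using corner_or_one[of r s] corner_values assms by (auto simp: J1_def le_add_diff_inverse)
    qed
    then show ?thesis ..
  qed
qed

lemma ones_off_corners_if_framed_rect:
  assumes cA: "convex01 m n A" and "b < m" "d < n" and fr: "framed_rect m n A a b c d"
  shows "ones_off_corners A a b c d"
  unfolding ones_off_corners_def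
proof (intro allI impI)
  fix p q
  assume pq: "a \<le> p \<and> p \<le> b \<and> c \<le> q \<and> q \<le> d \<and> (p \<noteq> a \<and> p \<noteq> b \<or> q \<noteq> c \<and> q \<noteq> d)"
  then have "p < m" "q < n" using assms by auto
  show "A p q = 1"
  proof (cases "p = a \<or> p = b")
    case True
    then show ?thesis using fr pq \<open>q < n\<close> unfolding framed_rect_def framed_def by auto
  next
    case False
    then have "A p c = 1" "A p d = 1"
      using fr pq assms unfolding framed_rect_def framed_def by auto
    moreover have "convex_line n (A p)" using cA \<open>p < m\<close> unfolding convex01_iff by blast
    ultimately show ?thesis using convex_lineD[of n "A p" c q d] pq assms by simp
  qed
qed

lemma framed_rect_iff:
  assumes "convex01 m n A" "a \<le> b" "b < m" "c \<le> d" "d < n"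
  shows "framed_rect m n A a b c d \<longleftrightarrow>
         ones_off_corners A a b c d \<and>
         (\<forall>j<n. (j < c \<or> d < j) \<longrightarrow> A a j = 0 \<and> A b j = 0) \<and>
         (\<forall>i<m. (i < a \<or> b < i) \<longrightarrow> A i c = 0 \<and> A i d = 0)"
    (is "_ \<longleftrightarrow> _ \<and> ?zeros")
proof
  assume "framed_rect m n A a b c d"
  then show "ones_off_corners A a b c d \<and> ?zeros"
    using ones_off_corners_if_framed_rect[OF assms(1,3,5)]
    unfolding framed_rect_def framed_def by blast
next
  assume ones_zeros: "ones_off_corners A a b c d \<and> ?zeros"
  then have ones: "A p q = 1"
    if "a \<le> p" "p \<le> b" "c \<le> q" "q \<le> d" "p \<noteq> a \<and> p \<noteq> b \<or> q \<noteq> c \<and> q \<noteq> d" for p q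
    using that unfolding ones_off_corners_def by blast
  show "framed_rect m n A a b c d"
    using ones_zeros assms unfolding framed_rect_def framed_def by (auto simp: ones)
qed

theorem mainTheorem8:
  fixes m n :: nat and A :: "nat \<Rightarrow> nat \<Rightarrow> nat"
  assumes "convex01 m n A"
    and "\<forall>i<m. (\<Sum>j<n. A i j) \<ge> 2"
    and "\<forall>j<n. (\<Sum>i<m. A i j) \<ge> 2"
  shows "(\<exists>B. interchange m n A B \<and> convex01 m n B) \<longleftrightarrow>
    (\<exists>a b c d. a < b \<and> b < m \<and> c < d \<and> d < n \<and>
       (submatrix_eq A a b c d (J1 (b - a + 1) (d - c + 1)) \<or>
        submatrix_eq A a b c d (J2 (b - a + 1) (d - c + 1))) \<and>
       (\<forall>j<n. (j < c \<or> d < j) \<longrightarrow> A a j = 0 \<and> A b j = 0) \<and>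
       (\<forall>i<m. (i < a \<or> b < i) \<longrightarrow> A i c = 0 \<and> A i d = 0))"
proof -
  have "(\<exists>B. interchange m n A B \<and> convex01 m n B) \<longleftrightarrow>
        (\<exists>a b c d. a < b \<and> b < m \<and> c < d \<and> d < n \<and>
           interchangeable A a b c d \<and> framed_rect m n A a b c d)"
    using framed_rect_if_convex_interchange[OF assms(1) _ _ assms(2,3)]
      interchange_flip_corners convex01_flip_corners[OF assms(1)]
    by (metis less_imp_le)
  moreover have "interchangeable A a b c d \<and> framed_rect m n A a b c d \<longleftrightarrow>
      (submatrix_eq A a b c d (J1 (b - a + 1) (d - c + 1)) \<or>
       submatrix_eq A a b c d (J2 (b - a + 1) (d - c + 1))) \<and>
      (\<forall>j<n. (j < c \<or> d < j) \<longrightarrow> A a j = 0 \<and> A b j = 0) \<and>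
      (\<forall>i<m. (i < a \<or> b < i) \<longrightarrow> A i c = 0 \<and> A i d = 0)"
    if "a < b" "b < m" "c < d" "d < n" for a b c d
    using submatrix_eq_J1_or_J2_iff[OF that(1,3)] framed_rect_iff[OF assms(1)] that by auto
  ultimately show ?thesis by blast
qed

end
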